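(* Let $H \cong K_n - xy$ where $xy \in E(K_n)$, and let $g$ be a demand function for $H$. If $L$ is a fractional list-assignment for $H$ such that (i) for each $v\in V(H)\setminus\{x, y\}$, $\mu(L(v)) \geq \max\{g(x), g(y)\} + \sum_{u\in V(H)\setminus \{x, y\}}g(u)$, (ii) $\mu(L(x)) \geq g(x)$ and $\mu(L(y)) \geq g(y)$, and (iii) $\mu(L(x)) + \mu(L(y)) \geq \sum_{v\in V(H)}g(v)$, then $H$ has a fractional $(g, L)$-coloring.
   Context: $\mu$ is Lebesgue measure. A demand function for a graph $H$ is a function $g: V(H)\to [0,1]\cap\mathbb{Q}$. A fractional list-assignment is a function $L$ assigning to each vertex a measurable subset $L(v)\subseteq[0,1]$. A fractional $(g,L)$-coloring of $H$ is an assignment $\phi$ of measurable sets $\phi(v)\subseteq L(v)$ with $\mu(\phi(v))\geq g(v)$ for every vertex and $\phi(u)\cap\phi(v)=\varnothing$ for every edge $uv$ of $H$. *)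

theory Defs
  imports "HOL-Analysis.Analysis"
begin

definition Kn_minus_edge :: "'a set \<Rightarrow> 'a \<Rightarrow> 'a \<Rightarrow> 'a \<Rightarrow> 'a \<Rightarrow> bool" where
  "Kn_minus_edge V x y u v \<longleftrightarrow> u \<in> V \<and> v \<in> V \<and> u \<noteq> v \<and> {u, v} \<noteq> {x, y}"

definition demand_function :: "'a set \<Rightarrow> ('a \<Rightarrow> real) \<Rightarrow> bool" where
  "demand_function V g \<longleftrightarrow> (\<forall>v\<in>V. g v \<in> {0..1} \<inter> \<rat>)"

definition frac_list_assignment :: "'a set \<Rightarrow> ('a \<Rightarrow> real set) \<Rightarrow> bool" where
  "frac_list_assignment V L \<longleftrightarrow> (\<forall>v\<in>V. L v \<in> sets lebesgue \<and> L v \<subseteq> {0..1})"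

definition frac_coloring ::
  "'a set \<Rightarrow> ('a \<Rightarrow> 'a \<Rightarrow> bool) \<Rightarrow> ('a \<Rightarrow> real) \<Rightarrow> ('a \<Rightarrow> real set) \<Rightarrow> ('a \<Rightarrow> real set) \<Rightarrow> bool" where
  "frac_coloring V E g L \<phi> \<longleftrightarrow>
     (\<forall>v\<in>V. \<phi> v \<in> sets lebesgue \<and> \<phi> v \<subseteq> L v \<and> measure lebesgue (\<phi> v) \<ge> g v) \<and>
     (\<forall>u\<in>V. \<forall>v\<in>V. E u v \<longrightarrow> \<phi> u \<inter> \<phi> v = {})"

end

theory Submission
  imports Defs
begin

text \<open>The vertices of \<open>S = V - {x, y}\<close> form a clique joined to both \<open>x\<close> and \<open>y\<close>.
  Colour them one at a time: give \<open>v \<in> S\<close> a set \<open>T \<subseteq> L v\<close> of measure \<open>g v\<close> and delete \<open>T\<close>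
  from all remaining lists. Every other list in \<open>S\<close> loses at most \<open>g v\<close>, which is exactly
  what (i) can afford. The set \<open>T\<close> is taken first from the part of \<open>L v\<close> outside
  \<open>L x \<union> L y\<close>, then from the parts where \<open>x\<close> or \<open>y\<close> alone has slack, and only then
  from \<open>L x \<inter> L y\<close>; this keeps (ii) and (iii) true with \<open>\<Sum>g\<close> reduced by \<open>g v\<close>.
  Once \<open>S\<close> is exhausted, the non-adjacent vertices \<open>x\<close> and \<open>y\<close> keep their remaining lists.\<close>

lemma lmeasurable_obtain_subset_of_measure:
  fixes A :: "real set"
  assumes A: "A \<in> lmeasurable" and t: "0 \<le> t" "t \<le> measure lebesgue A"
  obtains B where "B \<in> sets lebesgue" "B \<subseteq> A" "measure lebesgue B = t"
proof (cases "t = measure lebesgue A")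
  case True
  with A show ?thesis by (intro that[of A]) auto
next
  case False
  define f where "f s = measure lebesgue (A \<inter> {-s<..<s})" for s
  have fin: "A \<inter> {-s<..<s} \<in> lmeasurable" for s
    using A by (simp add: fmeasurable_Int_fmeasurable)
  have exhaust: "(\<Union>n. A \<inter> {- real n<..<real n}) = A"
  proof (intro equalityI subsetI)
    fix z assume "z \<in> A"
    moreover obtain n where "\<bar>z\<bar> < real n"
      using reals_Archimedean2 by blast
    ultimately show "z \<in> (\<Union>n. A \<inter> {- real n<..<real n})"
      by (auto simp: abs_less_iff intro!: exI[of _ n])
  qed auto
  have "(\<lambda>n. f (real n)) \<longlonglongrightarrow> measure lebesgue (\<Union>n. A \<inter> {- real n<..<real n})"
    unfolding f_def
  proof (rule Lim_measure_incseq)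
    show "incseq (\<lambda>n. A \<inter> {- real n<..<real n})"
      by (auto simp: incseq_def)
    show "emeasure lebesgue (\<Union>n. A \<inter> {- real n<..<real n}) \<noteq> \<infinity>"
      unfolding exhaust infinity_ennreal_def by (rule fmeasurableD2[OF A])
  qed (use A in auto)
  then have "\<forall>\<^sub>F n in sequentially. t < f (real n)"
    using False t unfolding exhaust by (intro order_tendstoD) auto
  then obtain n where n: "t < f (real n)"
    by (meson eventually_sequentially order.refl)
  have f_growth: "f u \<le> f s + 2 * (u - s)" if "0 \<le> s" "s \<le> u" for s u
  proof -
    have "f u \<le> measure lebesgue ((A \<inter> {-s<..<s}) \<union> ({-u..-s} \<union> {s..u}))"
      unfolding f_def using fin that by (intro measure_mono_fmeasurable) auto
    also have "\<dots> \<le> f s + measure lebesgue ({-u..-s} \<union> {s..u})"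
      unfolding f_def using fin by (intro measure_Un_le) auto
    also have "\<dots> \<le> f s + (measure lebesgue {-u..-s} + measure lebesgue {s..u})"
      using measure_Un_le[of "{-u..-s}" lebesgue "{s..u}"] by simp
    finally show ?thesis using that by simp
  qed
  have f_mono: "f s \<le> f u" if "s \<le> u" for s u
    unfolding f_def using fin that by (intro measure_mono_fmeasurable) auto
  have "2-lipschitz_on {0..real n} f"
  proof (rule lipschitz_onI)
    fix s u assume "s \<in> {0..real n}" "u \<in> {0..real n}"
    then show "dist (f s) (f u) \<le> 2 * dist s u"
      using f_growth[of s u] f_growth[of u s] f_mono[of s u] f_mono[of u s]
      by (cases "s \<le> u") (auto simp: dist_real_def)
  qed simp
  then have "continuous_on {0..real n} f"
    by (rule lipschitz_on_continuous_on)
  moreover have "f 0 = 0"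
    by (simp add: f_def)
  ultimately obtain s where "f s = t"
    using IVT'[of f 0 t "real n"] t n by auto
  then show ?thesis
    unfolding f_def using A by (intro that[of "A \<inter> {-s<..<s}"]) auto
qed

lemma measure_Int_plus_Diff:
  assumes "X \<in> fmeasurable M" "S \<in> sets M"
  shows "measure M (X \<inter> S) + measure M (X - S) = measure M X"
proof -
  have "X - S = X - (X \<inter> S)"
    by blast
  then show ?thesis
    using assms by (simp add: measurable_measure_Diff)
qed

lemma measure_split_by_two_sets:
  assumes "X \<in> fmeasurable M" "A \<in> sets M" "B \<in> sets M"
  shows "measure M (X \<inter> A) = measure M (X \<inter> A - B) + measure M (X \<inter> A \<inter> B)"
    and "measure M (X \<inter> B) = measure M ((X - A) \<inter> B) + measure M (X \<inter> A \<inter> B)"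
    and "measure M X = measure M (X - A - B) + measure M (X \<inter> A - B)
      + measure M ((X - A) \<inter> B) + measure M (X \<inter> A \<inter> B)"
proof -
  have XA: "X \<inter> A \<in> fmeasurable M" and XB: "X \<inter> B \<in> fmeasurable M" and XmA: "X - A \<in> fmeasurable M"
    using assms by (auto intro: fmeasurableI2[OF assms(1)])
  have "X \<inter> B \<inter> A = X \<inter> A \<inter> B" "X \<inter> B - A = (X - A) \<inter> B"
    by blast+
  then show "measure M (X \<inter> A) = measure M (X \<inter> A - B) + measure M (X \<inter> A \<inter> B)"
    and "measure M (X \<inter> B) = measure M ((X - A) \<inter> B) + measure M (X \<inter> A \<inter> B)"
    using measure_Int_plus_Diff[OF XA assms(3)] measure_Int_plus_Diff[OF XB assms(2)] by simp_all
  moreover have "measure M (X - A) = measure M (X - A - B) + measure M ((X - A) \<inter> B)"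
    using measure_Int_plus_Diff[OF XmA assms(3)] by simp
  ultimately show "measure M X = measure M (X - A - B) + measure M (X \<inter> A - B)
      + measure M ((X - A) \<inter> B) + measure M (X \<inter> A \<inter> B)"
    using measure_Int_plus_Diff[OF assms(1,2)] by simp
qed

text \<open>Here \<open>r0, rA, rB, rAB\<close> are the measures of the parts of a list \<open>L\<close> lying outside
  \<open>A \<union> B\<close>, in \<open>A\<close> only, in \<open>B\<close> only and in \<open>A \<inter> B\<close>, and \<open>MA, MB\<close> are the measures of
  \<open>A, B\<close>.\<close>

lemma split_demand_greedily:
  fixes r0 rA rB rAB MA MB a b G g :: real
  assumes "0 \<le> r0" "0 \<le> rA" "0 \<le> rB" "0 \<le> rAB"
    and "rA + rAB \<le> MA" "rB + rAB \<le> MB"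
    and "a \<le> MA" "b \<le> MB" "a + b + G \<le> MA + MB"
    and "max a b + G \<le> r0 + rA + rB + rAB"
    and "0 \<le> a" "0 \<le> b" "0 \<le> g" "g \<le> G"
  obtains t0 tA tB tAB where "0 \<le> t0" "0 \<le> tA" "0 \<le> tB" "0 \<le> tAB"
    "t0 \<le> r0" "tA \<le> rA" "tB \<le> rB" "tAB \<le> rAB" "t0 + tA + tB + tAB = g"
    "a \<le> MA - (tA + tAB)" "b \<le> MB - (tB + tAB)"
    "a + b + (G - g) \<le> (MA - (tA + tAB)) + (MB - (tB + tAB))"
proof -
  define t0 where "t0 = min g r0"
  define tA where "tA = min (g - t0) (min rA (MA - a))"
  define tB where "tB = min (g - t0 - tA) (min rB (MB - b))"
  define tAB where "tAB = g - t0 - tA - tB"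
  show ?thesis
    by (rule that[of t0 tA tB tAB]) (use assms in \<open>auto simp: t0_def tA_def tB_def tAB_def min_def\<close>)
qed

lemma obtain_subset_preserving_reserves:
  fixes A B L :: "real set"
  assumes lmeas: "A \<in> lmeasurable" "B \<in> lmeasurable" "L \<in> lmeasurable"
    and reserves: "a \<le> measure lebesgue A" "b \<le> measure lebesgue B"
      "a + b + G \<le> measure lebesgue A + measure lebesgue B"
    and L_large: "max a b + G \<le> measure lebesgue L"
    and nonneg: "0 \<le> a" "0 \<le> b" "0 \<le> g" and "g \<le> G"
  obtains T where "T \<in> sets lebesgue" "T \<subseteq> L" "measure lebesgue T = g"
    "a \<le> measure lebesgue (A - T)" "b \<le> measure lebesgue (B - T)"
    "a + b + (G - g) \<le> measure lebesgue (A - T) + measure lebesgue (B - T)"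
proof -
  define R0 RA RB RAB where "R0 = L - A - B" and "RA = L \<inter> A - B"
    and "RB = (L - A) \<inter> B" and "RAB = L \<inter> A \<inter> B"
  have sets: "A \<in> sets lebesgue" "B \<in> sets lebesgue"
    using lmeas by auto
  note L_parts = measure_split_by_two_sets[OF lmeas(3) sets, folded R0_def RA_def RB_def RAB_def]
  have R_lmeas: "R0 \<in> lmeasurable" "RA \<in> lmeasurable" "RB \<in> lmeasurable" "RAB \<in> lmeasurable"
    unfolding R0_def RA_def RB_def RAB_def using lmeas by (auto intro: fmeasurableI2[OF lmeas(3)])
  have "measure lebesgue (L \<inter> A) \<le> measure lebesgue A" "measure lebesgue (L \<inter> B) \<le> measure lebesgue B"
    using lmeas by (auto intro!: measure_mono_fmeasurable)
  then have mA: "measure lebesgue RA + measure lebesgue RAB \<le> measure lebesgue A"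
    and mB: "measure lebesgue RB + measure lebesgue RAB \<le> measure lebesgue B"
    using L_parts by simp_all
  obtain t0 tA tB tAB where t: "0 \<le> t0" "0 \<le> tA" "0 \<le> tB" "0 \<le> tAB"
    "t0 \<le> measure lebesgue R0" "tA \<le> measure lebesgue RA" "tB \<le> measure lebesgue RB"
    "tAB \<le> measure lebesgue RAB" "t0 + tA + tB + tAB = g"
    "a \<le> measure lebesgue A - (tA + tAB)" "b \<le> measure lebesgue B - (tB + tAB)"
    "a + b + (G - g) \<le> (measure lebesgue A - (tA + tAB)) + (measure lebesgue B - (tB + tAB))"
    using split_demand_greedily[OF measure_nonneg measure_nonneg measure_nonneg measure_nonneg mA mB
        reserves L_large[unfolded L_parts(3)] nonneg \<open>g \<le> G\<close>] by blast
  obtain T0 where T0: "T0 \<in> sets lebesgue" "T0 \<subseteq> R0" "measure lebesgue T0 = t0"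
    using lmeasurable_obtain_subset_of_measure[OF R_lmeas(1) t(1,5)] by blast
  obtain TA where TA: "TA \<in> sets lebesgue" "TA \<subseteq> RA" "measure lebesgue TA = tA"
    using lmeasurable_obtain_subset_of_measure[OF R_lmeas(2) t(2,6)] by blast
  obtain TB where TB: "TB \<in> sets lebesgue" "TB \<subseteq> RB" "measure lebesgue TB = tB"
    using lmeasurable_obtain_subset_of_measure[OF R_lmeas(3) t(3,7)] by blast
  obtain TAB where TAB: "TAB \<in> sets lebesgue" "TAB \<subseteq> RAB" "measure lebesgue TAB = tAB"
    using lmeasurable_obtain_subset_of_measure[OF R_lmeas(4) t(4,8)] by blast
  define T where "T = T0 \<union> TA \<union> TB \<union> TAB"
  have T_sub: "T \<subseteq> L"
    unfolding T_def using T0 TA TB TAB by (auto simp: R0_def RA_def RB_def RAB_def)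
  have T_sets: "T \<in> sets lebesgue"
    unfolding T_def using T0 TA TB TAB by auto
  have T_cut: "T - A - B = T0" "T \<inter> A - B = TA" "(T - A) \<inter> B = TB" "T \<inter> A \<inter> B = TAB"
    using T0(2) TA(2) TB(2) TAB(2) unfolding T_def R0_def RA_def RB_def RAB_def by blast+
  note T_parts = measure_split_by_two_sets[OF fmeasurableI2[OF lmeas(3) T_sub T_sets] sets,
      unfolded T_cut T0(3) TA(3) TB(3) TAB(3)]
  have "measure lebesgue (A - T) = measure lebesgue A - (tA + tAB)"
    using measure_Int_plus_Diff[OF lmeas(1) T_sets] T_parts(1) by (simp add: Int_commute)
  moreover have "measure lebesgue (B - T) = measure lebesgue B - (tB + tAB)"
    using measure_Int_plus_Diff[OF lmeas(2) T_sets] T_parts(2) by (simp add: Int_commute)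
  ultimately show ?thesis
    using that T_sets T_sub T_parts(3) t(9-12) by simp
qed

lemma frac_coloring_insert:
  assumes col: "frac_coloring V E g (\<lambda>w. L w - T) \<phi>" and "v \<notin> V"
    and T: "T \<in> sets lebesgue" "T \<subseteq> L v" "g v \<le> measure lebesgue T"
    and E': "\<forall>u\<in>V. \<forall>w\<in>V. E' u w \<longrightarrow> E u w" "\<not> E' v v"
  shows "frac_coloring (insert v V) E' g L (\<phi>(v := T))"
proof -
  have col_v: "\<phi> w \<in> sets lebesgue" "\<phi> w \<subseteq> L w - T" "g w \<le> measure lebesgue (\<phi> w)" if "w \<in> V" for w
    using col that unfolding frac_coloring_def by blast+
  have col_e: "\<phi> u \<inter> \<phi> w = {}" if "u \<in> V" "w \<in> V" "E' u w" for u w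
    using col that E'(1) unfolding frac_coloring_def by blast
  show ?thesis
    unfolding frac_coloring_def
  proof (rule conjI; intro ballI impI)
    fix w assume "w \<in> insert v V"
    then show "(\<phi>(v := T)) w \<in> sets lebesgue \<and> (\<phi>(v := T)) w \<subseteq> L w \<and> g w \<le> measure lebesgue ((\<phi>(v := T)) w)"
      using T col_v by (cases "w = v") auto
  next
    fix u w assume "u \<in> insert v V" "w \<in> insert v V" "E' u w"
    then show "(\<phi>(v := T)) u \<inter> (\<phi>(v := T)) w = {}"
      using col_v(2) col_e E'(2) \<open>v \<notin> V\<close> by (cases "u = v"; cases "w = v") auto
  qed
qed

lemma frac_colorable_Kn_minus_edge:
  fixes L :: "'a \<Rightarrow> real set"
  assumes "finite S" "x \<notin> S" "y \<notin> S" "x \<noteq> y"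
    and "\<forall>v\<in>insert x (insert y S). 0 \<le> g v"
    and "\<forall>v\<in>insert x (insert y S). L v \<in> lmeasurable"
    and "\<forall>v\<in>S. max (g x) (g y) + sum g S \<le> measure lebesgue (L v)"
    and "g x \<le> measure lebesgue (L x)" "g y \<le> measure lebesgue (L y)"
    and "g x + g y + sum g S \<le> measure lebesgue (L x) + measure lebesgue (L y)"
  shows "\<exists>\<phi>. frac_coloring (insert x (insert y S)) (Kn_minus_edge (insert x (insert y S)) x y) g L \<phi>"
  using assms
proof (induction S arbitrary: L rule: finite_induct)
  case empty
  then have "frac_coloring {x, y} (Kn_minus_edge {x, y} x y) g L L"
    by (auto simp: frac_coloring_def Kn_minus_edge_def insert_commute)
  then show ?case
    by blast
next
  case (insert v S)
  let ?V = "insert x (insert y S)"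
  have lmeas: "L x \<in> lmeasurable" "L y \<in> lmeasurable" "L v \<in> lmeasurable"
    "\<forall>w\<in>S. L w \<in> lmeasurable"
    using insert.prems(5) by auto
  have nonneg: "0 \<le> g x" "0 \<le> g y" "0 \<le> g v" "\<forall>w\<in>S. 0 \<le> g w"
    using insert.prems(4) by auto
  have sum_insert: "sum g (insert v S) = g v + sum g S"
    using insert.hyps by simp
  obtain T where T: "T \<in> sets lebesgue" "T \<subseteq> L v" "measure lebesgue T = g v"
    "g x \<le> measure lebesgue (L x - T)" "g y \<le> measure lebesgue (L y - T)"
    "g x + g y + (sum g (insert v S) - g v) \<le> measure lebesgue (L x - T) + measure lebesgue (L y - T)"
  proof (rule obtain_subset_preserving_reserves[OF lmeas(1-3) insert.prems(7-9)])
    show "max (g x) (g y) + sum g (insert v S) \<le> measure lebesgue (L v)"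
      using insert.prems(6) by simp
    show "g v \<le> sum g (insert v S)"
      using sum_insert sum_nonneg[of S g] nonneg(4) by simp
  qed (use nonneg in auto)
  have T_lmeas: "T \<in> lmeasurable"
    using fmeasurableI2[OF lmeas(3) T(2,1)] .
  have "\<exists>\<phi>. frac_coloring ?V (Kn_minus_edge ?V x y) g (\<lambda>w. L w - T) \<phi>"
  proof (rule insert.IH)
    show "\<forall>w\<in>S. max (g x) (g y) + sum g S \<le> measure lebesgue (L w - T)"
    proof
      fix w assume "w \<in> S"
      then have "max (g x) (g y) + sum g S + g v \<le> measure lebesgue (L w)"
        using insert.prems(6) sum_insert by (simp add: algebra_simps)
      moreover have "measure lebesgue (L w) - measure lebesgue T \<le> measure lebesgue (L w - T)"
        using lmeas(4) \<open>w \<in> S\<close> T_lmeas by (intro measure_diff_le_measure_setdiff) auto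
      ultimately show "max (g x) (g y) + sum g S \<le> measure lebesgue (L w - T)"
        using T(3) by simp
    qed
    show "\<forall>w\<in>?V. L w - T \<in> lmeasurable"
      using insert.prems(5) T(1) by (auto intro: fmeasurable_Diff)
    show "g x + g y + sum g S \<le> measure lebesgue (L x - T) + measure lebesgue (L y - T)"
      using T(6) sum_insert by simp
  qed (use insert.prems T in auto)
  then obtain \<phi> where "frac_coloring ?V (Kn_minus_edge ?V x y) g (\<lambda>w. L w - T) \<phi>"
    by blast
  then have "frac_coloring (insert v ?V) (Kn_minus_edge (insert v ?V) x y) g L (\<phi>(v := T))"
    using insert.hyps insert.prems(1,2) T(1-3) by (intro frac_coloring_insert) (auto simp: Kn_minus_edge_def)
  then show ?case
    by (auto simp: insert_commute)
qed

theorem corollary2p12: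
  fixes V :: "'a set" and x y :: 'a and g :: "'a \<Rightarrow> real" and L :: "'a \<Rightarrow> real set"
  assumes "finite V" and "x \<in> V" and "y \<in> V" and "x \<noteq> y"
    and "demand_function V g"
    and "frac_list_assignment V L"
    and "\<forall>v\<in>V - {x, y}. measure lebesgue (L v) \<ge> max (g x) (g y) + (\<Sum>u\<in>V - {x, y}. g u)"
    and "measure lebesgue (L x) \<ge> g x" and "measure lebesgue (L y) \<ge> g y"
    and "measure lebesgue (L x) + measure lebesgue (L y) \<ge> (\<Sum>v\<in>V. g v)"
  shows "\<exists>\<phi>. frac_coloring V (Kn_minus_edge V x y) g L \<phi>"
proof -
  define S where "S = V - {x, y}"
  have V: "V = insert x (insert y S)"
    using assms(2,3) by (auto simp: S_def)
  have S: "finite S" "x \<notin> S" "y \<notin> S"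
    using assms(1) by (auto simp: S_def)
  have "sum g V = g x + g y + sum g S"
    using S assms(4) by (simp add: V)
  moreover have "\<forall>v\<in>V. 0 \<le> g v"
    using assms(5) by (auto simp: demand_function_def)
  moreover have "\<forall>v\<in>V. L v \<in> lmeasurable"
    using assms(6) by (auto simp: frac_list_assignment_def intro: fmeasurableI2[of "{0..1}"])
  ultimately show ?thesis
    using frac_colorable_Kn_minus_edge[OF S assms(4), of g L] assms(7-10)
    unfolding V[symmetric] S_def[symmetric] by simp
qed

end
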